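(* Let $\{GR_n\}$ be the Gaussian Tetranacci-Lucas numbers. Then for every $n\ge1$: (a) $\sum_{k=1}^nGR_k=\frac13\left(GR_{n+2}+2GR_n+GR_{n-1}-10+2i\right)$; (b) $\sum_{k=1}^nGR_{2k+1}=\frac13\left(2GR_{2n+2}+GR_{2n}-GR_{2n-1}-11-2i\right)$; (c) $\sum_{k=1}^nGR_{2k}=\frac13\left(2GR_{2n+1}+GR_{2n-1}-GR_{2n-2}-2-8i\right)$.
   Context: The Gaussian Tetranacci-Lucas numbers are defined by $GR_0=4-i$, $GR_1=1+4i$, $GR_2=3+i$, $GR_3=7+3i$ and $GR_n=GR_{n-1}+GR_{n-2}+GR_{n-3}+GR_{n-4}$ for $n\ge4$. *)

theory Defs
  imports Complex_Main
begin

fun GR :: "nat \<Rightarrow> complex" where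
  "GR 0 = 4 - \<i>"
| "GR (Suc 0) = 1 + 4 * \<i>"
| "GR (Suc (Suc 0)) = 3 + \<i>"
| "GR (Suc (Suc (Suc 0))) = 7 + 3 * \<i>"
| "GR (Suc (Suc (Suc (Suc n)))) =
     GR (Suc (Suc (Suc n))) + GR (Suc (Suc n)) + GR (Suc n) + GR n"

end

theory Submission
  imports Defs
begin

text \<open>All three sums telescope, for any sequence satisfying the Tetranacci recurrence:
  \<open>3 W (k + 2) = (W (k + 4) + 2 W (k + 2) + W (k + 1)) - (W (k + 3) + 2 W (k + 1) + W k)\<close>,
  and likewise \<open>3 W (2k + 5)\<close> and \<open>3 W (2k + 4)\<close> are the increments of
  \<open>2 W (2k + 4) + W (2k + 2) - W (2k + 1)\<close> and \<open>2 W (2k + 3) + W (2k + 1) - W (2k)\<close>.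
  The constants in the theorem are the boundary terms evaluated at the initial values of \<open>GR\<close>.\<close>

locale tetranacci_seq =
  fixes W :: "nat \<Rightarrow> 'a::comm_ring_1"
  assumes tetranacci_rec:
    "W (Suc (Suc (Suc (Suc n)))) = W (Suc (Suc (Suc n))) + W (Suc (Suc n)) + W (Suc n) + W n"
begin

lemma sum_formula:
  "3 * (\<Sum>k=1..Suc n. W k) = W (n + 3) + 2 * W (n + 1) + W n - (W 3 - W 1 + W 0)"
proof (induction n)
  case 0
  show ?case by (simp add: algebra_simps eval_nat_numeral)
next
  case (Suc n)
  then show ?case
    using tetranacci_rec[of n] by (simp add: algebra_simps eval_nat_numeral)
qed

lemma sum_odd_formula:
  "3 * (\<Sum>k=1..Suc n. W (2 * k + 1)) =
    2 * W (2 * n + 4) + W (2 * n + 2) - W (2 * n + 1) - (3 * W 2 - W 3 + W 1 + 2 * W 0)"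
proof (induction n)
  case 0
  show ?case
    using tetranacci_rec[of 0] by (simp add: algebra_simps eval_nat_numeral)
next
  case (Suc n)
  then show ?case
    using tetranacci_rec[of "2 * n + 1"] tetranacci_rec[of "2 * n + 2"]
    by (simp add: algebra_simps eval_nat_numeral)
qed

lemma sum_even_formula:
  "3 * (\<Sum>k=1..Suc n. W (2 * k)) =
    2 * W (2 * n + 3) + W (2 * n + 1) - W (2 * n) - (2 * W 3 - 3 * W 2 + W 1 - W 0)"
proof (induction n)
  case 0
  show ?case by (simp add: algebra_simps eval_nat_numeral)
next
  case (Suc n)
  then show ?case
    using tetranacci_rec[of "2 * n"] tetranacci_rec[of "2 * n + 1"]
    by (simp add: algebra_simps eval_nat_numeral)
qed

end

interpretation GR: tetranacci_seq GR
  by unfold_locales simp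

theorem mainTheorem14:
  fixes n :: nat
  assumes "n \<ge> 1"
  shows "((\<Sum>k=1..n. GR k) = (GR (n+2) + 2 * GR n + GR (n-1) - 10 + 2 * \<i>) / 3) \<and>
    ((\<Sum>k=1..n. GR (2*k+1)) = (2 * GR (2*n+2) + GR (2*n) - GR (2*n-1) - 11 - 2 * \<i>) / 3) \<and>
    ((\<Sum>k=1..n. GR (2*k)) = (2 * GR (2*n+1) + GR (2*n-1) - GR (2*n-2) - 2 - 8 * \<i>) / 3)"
proof -
  obtain m where n: "n = Suc m"
    using assms by (cases n) auto
  have "3 * (\<Sum>k=1..n. GR k) = GR (n+2) + 2 * GR n + GR (n-1) - 10 + 2 * \<i>"
    using GR.sum_formula[of m] by (simp add: n eval_nat_numeral)
  moreover have "3 * (\<Sum>k=1..n. GR (2*k+1)) = 2 * GR (2*n+2) + GR (2*n) - GR (2*n-1) - 11 - 2 * \<i>"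
    using GR.sum_odd_formula[of m] by (simp add: n eval_nat_numeral)
  moreover have "3 * (\<Sum>k=1..n. GR (2*k)) = 2 * GR (2*n+1) + GR (2*n-1) - GR (2*n-2) - 2 - 8 * \<i>"
    using GR.sum_even_formula[of m] by (simp add: n eval_nat_numeral)
  ultimately show ?thesis
    by (simp add: eq_divide_eq mult.commute)
qed

end
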